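(* Let $(G,H,T)$ be an RCC loop folder and let $K\le G$ with $HG'\le K$. Then $|G:C_G(t)|\le|K:H|$ for all $t\in T$.
   Context: A loop folder is a triple $(G,H,T)$ with $G$ a finite group, $H\le G$, and $T\subseteq G$ with $1\in T$ such that $T$ is a set of representatives for the right cosets $H^g\backslash G$ for every $g\in G$; it is an RCC loop folder if $T$ is invariant under conjugation by $G$. $G'$ is the commutator subgroup. *)

theory Defs
  imports "HOL-Algebra.Algebra"
begin

definition conj_set :: "('a, 'b) monoid_scheme \<Rightarrow> 'a set \<Rightarrow> 'a \<Rightarrow> 'a set" where
  "conj_set G H g = (\<lambda>h. inv\<^bsub>G\<^esub> g \<otimes>\<^bsub>G\<^esub> h \<otimes>\<^bsub>G\<^esub> g) ` H"

definition right_transversal :: "('a, 'b) monoid_scheme \<Rightarrow> 'a set \<Rightarrow> 'a set \<Rightarrow> bool" where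
  "right_transversal G S T \<longleftrightarrow> T \<subseteq> carrier G \<and>
     (\<forall>C \<in> rcosets\<^bsub>G\<^esub> S. \<exists>!t. t \<in> T \<and> t \<in> C)"

definition loop_folder :: "('a, 'b) monoid_scheme \<Rightarrow> 'a set \<Rightarrow> 'a set \<Rightarrow> bool" where
  "loop_folder G H T \<longleftrightarrow> group G \<and> finite (carrier G) \<and> subgroup H G \<and>
     T \<subseteq> carrier G \<and> \<one>\<^bsub>G\<^esub> \<in> T \<and>
     (\<forall>g \<in> carrier G. right_transversal G (conj_set G H g) T)"

definition RCC_loop_folder :: "('a, 'b) monoid_scheme \<Rightarrow> 'a set \<Rightarrow> 'a set \<Rightarrow> bool" where
  "RCC_loop_folder G H T \<longleftrightarrow> loop_folder G H T \<and>
     (\<forall>g \<in> carrier G. (\<lambda>t. inv\<^bsub>G\<^esub> g \<otimes>\<^bsub>G\<^esub> t \<otimes>\<^bsub>G\<^esub> g) ` T = T)"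

definition centralizer :: "('a, 'b) monoid_scheme \<Rightarrow> 'a \<Rightarrow> 'a set" where
  "centralizer G t = {g \<in> carrier G. g \<otimes>\<^bsub>G\<^esub> t = t \<otimes>\<^bsub>G\<^esub> g}"

end

theory Submission
  imports Defs
begin

text \<open>Every conjugate \<open>g\<inverse> t g\<close> of \<open>t \<in> T\<close> lies again in \<open>T\<close>, and \<open>g\<inverse> t g t\<inverse>\<close> is a
  commutator, so it lies in \<open>G' \<subseteq> K\<close>. Hence \<open>g \<mapsto> H g\<inverse> t g t\<inverse>\<close> sends \<open>G\<close> to the right
  cosets of \<open>H\<close> in \<open>K\<close>. Equal images give \<open>H g\<inverse> t g = H g'\<inverse> t g'\<close>, and as \<open>T\<close> is a right
  transversal of \<open>H\<close> this forces \<open>g\<inverse> t g = g'\<inverse> t g'\<close>, i.e. \<open>C\<^sub>G(t) g = C\<^sub>G(t) g'\<close>.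
  So \<open>C\<^sub>G(t)\<close> has at most \<open>|K:H|\<close> right cosets.\<close>

lemma conj_set_one:
  fixes G (structure)
  assumes "group G" "H \<subseteq> carrier G"
  shows "conj_set G H \<one> = H"
proof -
  interpret group G by fact
  have "inv \<one> \<otimes> h \<otimes> \<one> = h" if "h \<in> H" for h
    using that assms(2) by auto
  then show ?thesis unfolding conj_set_def by simp
qed

lemma loop_folder_right_transversal:
  assumes "loop_folder G H T"
  shows "right_transversal G H T"
proof -
  have "group G" "subgroup H G" using assms by (simp_all add: loop_folder_def)
  moreover have "right_transversal G (conj_set G H \<one>\<^bsub>G\<^esub>) T"
    using assms \<open>group G\<close> by (simp add: loop_folder_def group.is_monoid)
  ultimately show ?thesis by (simp add: conj_set_one subgroup.subset)
qed

lemma right_transversal_unique: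
  fixes G (structure)
  assumes "right_transversal G H T" "subgroup H G" "group G"
    and "s \<in> T" "s' \<in> T" "H #> s = H #> s'"
  shows "s = s'"
proof -
  interpret group G by fact
  have carrier: "s \<in> carrier G" "s' \<in> carrier G"
    using assms(1,4,5) by (auto simp: right_transversal_def)
  have "H #> s \<in> rcosets H"
    using carrier assms(2) by (simp add: rcosetsI subgroup.subset)
  then have "\<exists>!u. u \<in> T \<and> u \<in> H #> s"
    using assms(1) by (simp add: right_transversal_def)
  moreover have "s \<in> H #> s" "s' \<in> H #> s"
    using rcos_self[OF carrier(1) assms(2)] rcos_self[OF carrier(2) assms(2)] assms(6) by simp_all
  ultimately show ?thesis using assms(4,5) by blast
qed

lemma rcosets_in_subgroup:
  "rcosets\<^bsub>G\<lparr>carrier := K\<rparr>\<^esub> H = (\<lambda>a. H #>\<^bsub>G\<^esub> a) ` K"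
  by (auto simp: RCOSETS_def r_coset_def)

context group
begin

lemma commutes_iff_conjugate_fixed:
  assumes "x \<in> carrier G" "t \<in> carrier G"
  shows "x \<otimes> t = t \<otimes> x \<longleftrightarrow> inv x \<otimes> t \<otimes> x = t"
proof -
  have "inv x \<otimes> t \<otimes> x = t \<longleftrightarrow> t \<otimes> x = x \<otimes> t"
    using assms by (simp add: m_assoc inv_solve_left')
  then show ?thesis by (auto dest: sym)
qed

lemma centralizer_subgroup:
  assumes "t \<in> carrier G"
  shows "subgroup (centralizer G t) G"
proof
  fix x y assume "x \<in> centralizer G t" "y \<in> centralizer G t"
  then have xt: "x \<otimes> t = t \<otimes> x" and yt: "y \<otimes> t = t \<otimes> y"
    and carr: "x \<in> carrier G" "y \<in> carrier G"
    by (simp_all add: centralizer_def)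
  have "x \<otimes> y \<otimes> t = x \<otimes> (t \<otimes> y)" using carr assms by (simp add: m_assoc yt)
  also have "\<dots> = t \<otimes> x \<otimes> y" using carr assms by (simp add: m_assoc[symmetric] xt)
  finally show "x \<otimes> y \<in> centralizer G t"
    using carr assms by (simp add: centralizer_def m_assoc)
  have "inv x \<otimes> t = inv x \<otimes> (t \<otimes> x) \<otimes> inv x" using carr assms by (simp add: m_assoc)
  also have "\<dots> = t \<otimes> inv x" using carr assms by (simp add: xt[symmetric] m_assoc[symmetric])
  finally show "inv x \<in> centralizer G t"
    using carr by (simp add: centralizer_def)
qed (use assms in \<open>auto simp: centralizer_def\<close>)

lemma rcos_centralizer_eq_if_conjugates_eq:
  assumes "t \<in> carrier G" "g \<in> carrier G" "g' \<in> carrier G"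
    and "inv g \<otimes> t \<otimes> g = inv g' \<otimes> t \<otimes> g'"
  shows "centralizer G t #> g = centralizer G t #> g'"
proof -
  have "inv (g' \<otimes> inv g) \<otimes> t \<otimes> (g' \<otimes> inv g) = g \<otimes> (inv g' \<otimes> t \<otimes> g') \<otimes> inv g"
    using assms by (simp add: inv_mult_group m_assoc)
  also have "\<dots> = g \<otimes> (inv g \<otimes> t \<otimes> g) \<otimes> inv g"
    by (simp only: assms(4))
  also have "\<dots> = t"
    using assms(1-3) by (simp add: m_assoc) (simp add: m_assoc[symmetric])
  finally have "g' \<otimes> inv g \<in> centralizer G t"
    using assms commutes_iff_conjugate_fixed[of "g' \<otimes> inv g" t] by (simp add: centralizer_def)
  then have "g' \<in> centralizer G t #> g"
    using assms by (simp add: subgroup.rcos_module centralizer_subgroup is_group)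
  then show ?thesis
    using assms by (simp add: repr_independence centralizer_subgroup)
qed

lemma commutator_in_derived:
  assumes "g \<in> carrier G" "t \<in> carrier G"
  shows "inv g \<otimes> t \<otimes> g \<otimes> inv t \<in> derived G (carrier G)"
proof -
  have "inv g \<otimes> t \<otimes> inv (inv g) \<otimes> inv t \<in> derived_set G (carrier G)"
    using assms by blast
  then show ?thesis
    using assms by (simp add: derived_def generate.incl)
qed

lemma card_rcosets_le_card_image:
  assumes "finite (carrier G)"
    and "\<And>g g'. \<lbrakk>g \<in> carrier G; g' \<in> carrier G; f g = f g'\<rbrakk> \<Longrightarrow> C #> g = C #> g'"
  shows "card (rcosets C) \<le> card (f ` carrier G)"
proof -
  have "C #> inv_into (carrier G) f (f g) = C #> g" if "g \<in> carrier G" for g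
    using assms(2) inv_into_into[of "f g" f "carrier G"] f_inv_into_f[of "f g" f "carrier G"] that
    by blast
  then have "(\<lambda>y. C #> inv_into (carrier G) f y) ` f ` carrier G = rcosets C"
    unfolding image_image RCOSETS_def by auto
  then show ?thesis
    using assms(1) card_image_le finite_imageI by metis
qed

lemma RCC_loop_folder_index_centralizer_le:
  assumes "RCC_loop_folder G H T" "subgroup K G" "H <#> derived G (carrier G) \<subseteq> K"
    and "t \<in> T"
  shows "card (rcosets (centralizer G t)) \<le> card (rcosets\<^bsub>G\<lparr>carrier := K\<rparr>\<^esub> H)"
proof -
  have lf: "loop_folder G H T" and conj_T: "\<forall>g \<in> carrier G. (\<lambda>s. inv g \<otimes> s \<otimes> g) ` T = T"
    using assms(1) by (simp_all add: RCC_loop_folder_def)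
  have H: "subgroup H G" and fin: "finite (carrier G)" and t: "t \<in> carrier G"
    using lf \<open>t \<in> T\<close> by (auto simp: loop_folder_def)
  define f where "f g = H #> (inv g \<otimes> t \<otimes> g \<otimes> inv t)" for g
  have f_into: "f ` carrier G \<subseteq> rcosets\<^bsub>G\<lparr>carrier := K\<rparr>\<^esub> H"
  proof -
    have "inv g \<otimes> t \<otimes> g \<otimes> inv t \<in> K" if "g \<in> carrier G" for g
      using commutator_in_derived[OF that t] subgroup.one_closed[OF H] assms(3) t that
      by (force simp: set_mult_def)
    then show ?thesis by (auto simp: f_def rcosets_in_subgroup)
  qed
  have f_fibres: "centralizer G t #> g = centralizer G t #> g'"
    if "g \<in> carrier G" "g' \<in> carrier G" "f g = f g'" for g g'
  proof -
    have "H #> (inv g \<otimes> t \<otimes> g) = H #> (inv g' \<otimes> t \<otimes> g')"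
      \<comment> \<open>multiply both cosets on the right by \<open>t\<close>\<close>
      using \<open>f g = f g'\<close> that t subgroup.subset[OF H]
      by (metis f_def coset_mult_assoc inv_closed m_closed inv_solve_right)
    moreover have "inv g \<otimes> t \<otimes> g \<in> T" "inv g' \<otimes> t \<otimes> g' \<in> T"
      using conj_T \<open>t \<in> T\<close> that by blast+
    ultimately show ?thesis
      using right_transversal_unique[OF loop_folder_right_transversal[OF lf] H is_group]
        rcos_centralizer_eq_if_conjugates_eq t that by blast
  qed
  have "finite (rcosets\<^bsub>G\<lparr>carrier := K\<rparr>\<^esub> H)"
    using fin subgroup.subset[OF assms(2)] by (simp add: rcosets_in_subgroup finite_subset)
  then have "card (f ` carrier G) \<le> card (rcosets\<^bsub>G\<lparr>carrier := K\<rparr>\<^esub> H)"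
    using f_into by (rule card_mono)
  with card_rcosets_le_card_image[OF fin f_fibres]
  show ?thesis by (rule le_trans)
qed

end

theorem lemma3p3:
  fixes G :: "('a, 'b) monoid_scheme" and H K T :: "'a set"
  assumes "RCC_loop_folder G H T"
    and "subgroup K G"
    and "H <#>\<^bsub>G\<^esub> derived G (carrier G) \<subseteq> K"
  shows "\<forall>t \<in> T. card (rcosets\<^bsub>G\<^esub> (centralizer G t))
                 \<le> card (rcosets\<^bsub>G\<lparr>carrier := K\<rparr>\<^esub> H)"
  using group.RCC_loop_folder_index_centralizer_le[OF _ assms] assms(1)
  by (simp add: RCC_loop_folder_def loop_folder_def)

end
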